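(* Let $F$ be a graph of diameter $2$, $n=|V(F)|$, $t=\delta(F)$, and let $l>n$ be an integer. For every subgraph $Y$ of $F_{2l}$ that is isomorphic to $F$ and contains the vertex $2l$: (1) the edges $(1,2l),(2,2l),\dots,(t,2l)$ all belong to $Y$; (2) $Y$ is a subgraph of $X$.
   Context: All graphs are simple, finite, undirected; $\delta(F)$ is the minimum degree of $F$. $A_{2l-1}$ is the graph with vertex set $\{1,\dots,2l-1\}$ in which distinct $i,j$ are adjacent iff $|i-j|\le l-1$. $F_{2l}$ is obtained from $A_{2l-1}$ by adding a new vertex $2l$ joined exactly to $1,2,\dots,t$. $X$ is the subgraph of $F_{2l}$ induced by the vertex set $\{1,2,\dots,l+t-1\}\cup\{2l\}$. *)

theory Defs
  imports Main
begin

type_synonym 'a graph = "'a set \<times> 'a set set"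

definition verts :: "'a graph \<Rightarrow> 'a set" where "verts G = fst G"
definition edges :: "'a graph \<Rightarrow> 'a set set" where "edges G = snd G"

definition simple_graph :: "'a graph \<Rightarrow> bool" where
  "simple_graph G \<longleftrightarrow> finite (verts G) \<and>
     edges G \<subseteq> {{u, v} | u v. u \<in> verts G \<and> v \<in> verts G \<and> u \<noteq> v}"

definition adj :: "'a graph \<Rightarrow> 'a \<Rightarrow> 'a \<Rightarrow> bool" where
  "adj G u v \<longleftrightarrow> {u, v} \<in> edges G"

definition neighbours :: "'a graph \<Rightarrow> 'a \<Rightarrow> 'a set" where
  "neighbours G v = {u \<in> verts G. adj G v u}"

definition degree :: "'a graph \<Rightarrow> 'a \<Rightarrow> nat" where
  "degree G v = card (neighbours G v)"

definition min_degree :: "'a graph \<Rightarrow> nat" where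
  "min_degree G = Min (degree G ` verts G)"

definition walk :: "'a graph \<Rightarrow> 'a list \<Rightarrow> bool" where
  "walk G xs \<longleftrightarrow> xs \<noteq> [] \<and> set xs \<subseteq> verts G \<and>
     (\<forall>i. Suc i < length xs \<longrightarrow> adj G (xs ! i) (xs ! Suc i))"

definition graph_connected :: "'a graph \<Rightarrow> bool" where
  "graph_connected G \<longleftrightarrow> (\<forall>u \<in> verts G. \<forall>v \<in> verts G.
     \<exists>xs. walk G xs \<and> hd xs = u \<and> last xs = v)"

definition gdist :: "'a graph \<Rightarrow> 'a \<Rightarrow> 'a \<Rightarrow> nat" where
  "gdist G u v = (LEAST k. \<exists>xs. walk G xs \<and> hd xs = u \<and> last xs = v \<and> length xs = Suc k)"

definition diameter :: "'a graph \<Rightarrow> nat" where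
  "diameter G = Max {gdist G u v | u v. u \<in> verts G \<and> v \<in> verts G}"

definition has_diameter :: "'a graph \<Rightarrow> nat \<Rightarrow> bool" where
  "has_diameter G d \<longleftrightarrow> verts G \<noteq> {} \<and> graph_connected G \<and> diameter G = d"

definition subgraph :: "'a graph \<Rightarrow> 'a graph \<Rightarrow> bool" where
  "subgraph H G \<longleftrightarrow> simple_graph H \<and> verts H \<subseteq> verts G \<and> edges H \<subseteq> edges G"

definition induced_subgraph :: "'a graph \<Rightarrow> 'a set \<Rightarrow> 'a graph" where
  "induced_subgraph G S = (verts G \<inter> S, {e \<in> edges G. e \<subseteq> S})"

definition isomorphic :: "'a graph \<Rightarrow> 'b graph \<Rightarrow> bool" where
  "isomorphic G H \<longleftrightarrow> (\<exists>f. bij_betw f (verts G) (verts H) \<and>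
     (\<forall>u \<in> verts G. \<forall>v \<in> verts G. adj G u v \<longleftrightarrow> adj H (f u) (f v)))"

definition A_graph :: "nat \<Rightarrow> nat graph" where
  "A_graph l = ({1..2*l-1},
     {{i, j} | i j. i \<in> {1..2*l-1} \<and> j \<in> {1..2*l-1} \<and> i \<noteq> j \<and>
        i - j \<le> l - 1 \<and> j - i \<le> l - 1})"

definition F_graph :: "nat \<Rightarrow> nat \<Rightarrow> nat graph" where
  "F_graph l t = (verts (A_graph l) \<union> {2*l},
     edges (A_graph l) \<union> {{i, 2*l} | i. i \<in> {1..t}})"

definition X_graph :: "nat \<Rightarrow> nat \<Rightarrow> nat graph" where
  "X_graph l t = induced_subgraph (F_graph l t) ({1..l+t-1} \<union> {2*l})"

end

theory Submission
  imports Defs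
begin

text \<open>The vertex 2l of F_2l is adjacent only to 1..t, so an isomorphic copy Y of F through 2l
  has degree at least t there and must use every edge (i, 2l) with i \<le> t. Since F has
  diameter 2, every other vertex of Y lies within distance 2 of 2l, hence is a neighbour of
  some i \<le> t; for l > n \<ge> t such neighbours lie in 1..l+t-1, so Y lives inside X.\<close>

lemma min_degree_le_degree:
  assumes "finite (verts G)" "v \<in> verts G"
  shows "min_degree G \<le> degree G v"
  unfolding min_degree_def using assms by (intro Min_le) auto

lemma degree_le_card_verts:
  assumes "finite (verts G)"
  shows "degree G v \<le> card (verts G)"
  unfolding degree_def neighbours_def using assms by (intro card_mono) auto

lemma min_degree_le_card_verts:
  assumes "finite (verts G)" "verts G \<noteq> {}"
  shows "min_degree G \<le> card (verts G)"
proof -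
  obtain v where "v \<in> verts G" using assms(2) by blast
  then show ?thesis
    using min_degree_le_degree[OF assms(1)] degree_le_card_verts[OF assms(1)] le_trans by blast
qed

lemma neighbours_iso_image:
  assumes f: "bij_betw f (verts G) (verts H)"
    and fadj: "\<forall>u \<in> verts G. \<forall>v \<in> verts G. adj G u v \<longleftrightarrow> adj H (f u) (f v)"
    and u: "u \<in> verts G"
  shows "neighbours H (f u) = f ` neighbours G u"
proof -
  have "neighbours H (f u) = {y \<in> f ` verts G. adj H (f u) y}"
    using f unfolding neighbours_def bij_betw_def by simp
  also have "\<dots> = f ` {v \<in> verts G. adj H (f u) (f v)}" by auto
  also have "\<dots> = f ` neighbours G u" unfolding neighbours_def using fadj u by auto
  finally show ?thesis .
qed

lemma degree_iso:
  assumes f: "bij_betw f (verts G) (verts H)"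
    and fadj: "\<forall>u \<in> verts G. \<forall>v \<in> verts G. adj G u v \<longleftrightarrow> adj H (f u) (f v)"
    and u: "u \<in> verts G"
  shows "degree H (f u) = degree G u"
proof -
  have "inj_on f (neighbours G u)"
    using f by (rule inj_on_subset[OF bij_betw_imp_inj_on]) (auto simp: neighbours_def)
  then show ?thesis
    unfolding degree_def neighbours_iso_image[OF assms] by (rule card_image)
qed

lemma isomorphic_min_degree_le_degree:
  assumes "isomorphic G H" "finite (verts G)" "v \<in> verts H"
  shows "min_degree G \<le> degree H v"
proof -
  obtain f where f: "bij_betw f (verts G) (verts H)"
    and fadj: "\<forall>u \<in> verts G. \<forall>v \<in> verts G. adj G u v \<longleftrightarrow> adj H (f u) (f v)"
    using assms(1) unfolding isomorphic_def by blast
  obtain u where u: "u \<in> verts G" "v = f u"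
    using f assms(3) unfolding bij_betw_def by blast
  show ?thesis
    using degree_iso[OF f fadj u(1)] min_degree_le_degree[OF assms(2) u(1)] u(2) by simp
qed

lemma gdist_le_diameter:
  assumes "finite (verts G)" "u \<in> verts G" "v \<in> verts G"
  shows "gdist G u v \<le> diameter G"
proof -
  have "{gdist G u v | u v. u \<in> verts G \<and> v \<in> verts G} = (\<lambda>(u, v). gdist G u v) ` (verts G \<times> verts G)"
    by auto
  then have "finite {gdist G u v | u v. u \<in> verts G \<and> v \<in> verts G}"
    using assms(1) by simp
  then show ?thesis
    unfolding diameter_def by (rule Max_ge) (use assms in auto)
qed

lemma shortest_walk_exists:
  assumes "graph_connected G" "u \<in> verts G" "v \<in> verts G"
  obtains xs where "walk G xs" "hd xs = u" "last xs = v" "length xs = Suc (gdist G u v)"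
proof -
  obtain xs where xs: "walk G xs" "hd xs = u" "last xs = v"
    using assms unfolding graph_connected_def by blast
  then have "\<exists>k xs. walk G xs \<and> hd xs = u \<and> last xs = v \<and> length xs = Suc k"
    by (intro exI[of _ "length xs - 1"] exI[of _ xs]) (auto simp: walk_def)
  from LeastI_ex[OF this] show ?thesis
    using that unfolding gdist_def by blast
qed

lemma has_diameter_2_adj_or_common_neighbour:
  assumes "has_diameter G 2" "finite (verts G)"
    and "u \<in> verts G" "w \<in> verts G" "u \<noteq> w"
  shows "adj G u w \<or> (\<exists>x \<in> verts G. adj G u x \<and> adj G x w)"
proof -
  have "graph_connected G" using assms(1) unfolding has_diameter_def by simp
  then obtain ys where ys: "walk G ys" "hd ys = u" "last ys = w" "length ys = Suc (gdist G u w)"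
    using assms(3,4) by (rule shortest_walk_exists)
  have "gdist G u w \<le> 2"
    using gdist_le_diameter[OF assms(2-4)] assms(1) unfolding has_diameter_def by simp
  have step: "\<And>i. Suc i < length ys \<Longrightarrow> adj G (ys ! i) (ys ! Suc i)" "set ys \<subseteq> verts G"
    using ys(1) unfolding walk_def by auto
  consider "length ys = 1" | "length ys = 2" | "length ys = 3"
    using ys(4) \<open>gdist G u w \<le> 2\<close> by linarith
  then show ?thesis
  proof cases
    case 1
    then obtain a where "ys = [a]" by (cases ys) auto
    then show ?thesis using ys assms(5) by simp
  next
    case 2
    then obtain a b where "ys = [a, b]" by (cases ys; cases "tl ys") auto
    then show ?thesis using ys step(1)[of 0] by simp
  next
    case 3
    then obtain a b c where "ys = [a, b, c]"
      by (cases ys; cases "tl ys"; cases "tl (tl ys)") auto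
    then show ?thesis using ys step(1)[of 0] step(1)[of 1] step(2) by auto
  qed
qed

lemma isomorphic_diameter_2_adj_or_common_neighbour:
  assumes "isomorphic G H" "has_diameter G 2" "finite (verts G)"
    and "u \<in> verts H" "w \<in> verts H" "u \<noteq> w"
  shows "adj H u w \<or> (\<exists>x \<in> verts H. adj H u x \<and> adj H x w)"
proof -
  obtain f where f: "bij_betw f (verts G) (verts H)"
    and fadj: "\<forall>u \<in> verts G. \<forall>v \<in> verts G. adj G u v \<longleftrightarrow> adj H (f u) (f v)"
    using assms(1) unfolding isomorphic_def by blast
  obtain u' w' where u': "u' \<in> verts G" "u = f u'" and w': "w' \<in> verts G" "w = f w'"
    using f assms(4,5) unfolding bij_betw_def by blast
  with assms(6) have "u' \<noteq> w'" by blast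
  with has_diameter_2_adj_or_common_neighbour[OF assms(2,3) u'(1) w'(1)]
  consider "adj G u' w'" | x where "x \<in> verts G" "adj G u' x" "adj G x w'"
    by blast
  then show ?thesis
  proof cases
    case 1
    then show ?thesis using fadj u' w' by blast
  next
    case 2
    then show ?thesis using fadj u' w' bij_betw_apply[OF f] by blast
  qed
qed

lemma edge_F_graph_cases:
  assumes "{a, b} \<in> edges (F_graph l t)" "t < l"
  shows "(a \<in> {1..2*l-1} \<and> b \<in> {1..2*l-1} \<and> a - b \<le> l - 1 \<and> b - a \<le> l - 1)
     \<or> (a = 2*l \<and> b \<in> {1..t}) \<or> (b = 2*l \<and> a \<in> {1..t})"
  using assms unfolding F_graph_def A_graph_def edges_def verts_def
  by (auto simp: doubleton_eq_iff)

lemma F_graph_top_edge: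
  assumes "{2*l, v} \<in> edges (F_graph l t)" "t < l"
  shows "v \<in> {1..t}"
  using edge_F_graph_cases[OF assms] assms(2) by auto

lemma F_graph_low_edge:
  assumes "{i, v} \<in> edges (F_graph l t)" "i \<in> {1..t}" "t < l"
  shows "v \<in> {1..l+t-1} \<union> {2*l}"
  using edge_F_graph_cases[OF assms(1,3)] assms(2,3) by auto

lemma F_graph_near_top:
  assumes "edges Y \<subseteq> edges (F_graph l t)" "t < l"
    and "adj Y (2*l) v \<or> (\<exists>i. adj Y (2*l) i \<and> adj Y i v)"
  shows "v \<in> {1..l+t-1} \<union> {2*l}"
  using assms(3)
proof
  assume "adj Y (2*l) v"
  then show ?thesis using assms(1,2) F_graph_top_edge unfolding adj_def by fastforce
next
  assume "\<exists>i. adj Y (2*l) i \<and> adj Y i v"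
  then obtain i where "{2*l, i} \<in> edges (F_graph l t)" "{i, v} \<in> edges (F_graph l t)"
    using assms(1) unfolding adj_def by blast
  then show ?thesis using assms(2) F_graph_top_edge F_graph_low_edge by blast
qed

lemma subgraph_induced_subgraphI:
  assumes "subgraph H G" "verts H \<subseteq> S"
  shows "subgraph H (induced_subgraph G S)"
proof -
  have "e \<subseteq> S" if "e \<in> edges H" for e
    using that assms unfolding subgraph_def simple_graph_def by blast
  then show ?thesis
    using assms unfolding subgraph_def induced_subgraph_def verts_def edges_def by auto
qed

theorem lemma4:
  fixes F :: "'a graph" and l n t :: nat and Y :: "nat graph"
  assumes "simple_graph F"
    and "has_diameter F 2"
    and "n = card (verts F)"
    and "t = min_degree F"
    and "l > n"
    and "subgraph Y (F_graph l t)"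
    and "isomorphic F Y"
    and "2*l \<in> verts Y"
  shows "(\<forall>i \<in> {1..t}. {i, 2*l} \<in> edges Y) \<and> subgraph Y (X_graph l t)"
proof -
  have finF: "finite (verts F)" using assms(1) unfolding simple_graph_def by simp
  have "t < l"
    using min_degree_le_card_verts[OF finF] assms(2-5) unfolding has_diameter_def by simp
  have EY: "edges Y \<subseteq> edges (F_graph l t)"
    using assms(6) unfolding subgraph_def by simp
  have nb_sub: "neighbours Y (2*l) \<subseteq> {1..t}"
    using EY F_graph_top_edge[OF _ \<open>t < l\<close>] unfolding neighbours_def adj_def by blast
  moreover have "t \<le> card (neighbours Y (2*l))"
    using isomorphic_min_degree_le_degree[OF assms(7) finF assms(8)] assms(4)
    unfolding degree_def by simp
  ultimately have "neighbours Y (2*l) = {1..t}"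
    using card_mono[OF _ nb_sub] by (intro card_subset_eq) auto
  then have top_edges: "\<forall>i \<in> {1..t}. {i, 2*l} \<in> edges Y"
    unfolding neighbours_def adj_def by (auto simp: insert_commute)
  have "v \<in> {1..l+t-1} \<union> {2*l}" if "v \<in> verts Y" for v
  proof (cases "v = 2*l")
    case False
    then show ?thesis
      using isomorphic_diameter_2_adj_or_common_neighbour[OF assms(7,2) finF assms(8) that]
        F_graph_near_top[OF EY \<open>t < l\<close>] by blast
  qed simp
  then have "subgraph Y (X_graph l t)"
    unfolding X_graph_def by (intro subgraph_induced_subgraphI[OF assms(6)] subsetI)
  with top_edges show ?thesis by simp
qed

end
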